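(* Suppose Assumption A holds. Then $$\mathcal D_{\mathrm{SDP}}=\Big\{(x,t)\in\mathbb R^{N}\times\mathbb R:\ \sup_{\gamma\in\Gamma} q(\gamma,x)\le 2t\Big\} \quad\text{and}\quad \mathrm{Opt}_{\mathrm{SDP}}=\min_{x\in\mathbb R^N}\ \sup_{\gamma\in\Gamma} q(\gamma,x).$$
   Context: Fix integers $N\ge 1$, $m_I,m_E\ge 0$ with $m:=m_I+m_E\ge 1$; write $[a,b]=\{a,\dots,b\}$ and $[n]=[1,n]$. For $i\in[0,m]$ let $q_i(x)=x^\top A_ix+2b_i^\top x+c_i$ with $A_i\in\mathbb S^N$ (real symmetric $N\times N$), $b_i\in\mathbb R^N$, $c_i\in\mathbb R$. The QCQP is $\mathrm{Opt}:=\inf\{q_0(x): q_i(x)\le 0\ \forall i\in[m_I],\ q_i(x)=0\ \forall i\in[m_I+1,m]\}$. Let $Q_i=\begin{pmatrix}c_i& b_i^\top\\ b_i& A_i\end{pmatrix}\in\mathbb S^{N+1}$. The SDP relaxation is $\mathrm{Opt}_{\mathrm{SDP}}:=\inf\{\langle Q_0,Y\rangle : Y=\begin{pmatrix}1&x^\top\\ x& X\end{pmatrix},\ x\in\mathbb R^N,\ X\in\mathbb S^N,\ \langle Q_i,Y\rangle\le 0\ \forall i\in[m_I],\ \langle Q_i,Y\rangle=0\ \forall i\in[m_I+1,m],\ Y\succeq 0\}$, where $\langle\cdot,\cdot\rangle$ is the trace inner product, and $\mathcal D_{\mathrm{SDP}}:=\{(x,t)\in\mathbb R^{N+1}:\exists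 X\in\mathbb S^N$ such that $Y=\begin{pmatrix}1&x^\top\\ x& X\end{pmatrix}$ satisfies $\langle Q_0,Y\rangle\le 2t$, $\langle Q_i,Y\rangle\le 0\ \forall i\in[m_I]$, $\langle Q_i,Y\rangle= 0\ \forall i\in[m_I+1,m]$, $Y\succeq 0\}$. For $\gamma\in\mathbb R^m$ set $A(\gamma)=A_0+\sum_{i=1}^m\gamma_iA_i$ and $q(\gamma,x)=q_0(x)+\sum_{i=1}^m\gamma_iq_i(x)$. Let $\Gamma:=\{\gamma\in\mathbb R^m: A(\gamma)\succeq 0,\ \gamma_i\ge 0\ \forall i\in[m_I]\}$. Assumption A: the feasible set of the QCQP is nonempty and there is $\gamma^*\in\mathbb R^m$ with $\gamma^*_i\ge0$ for all $i\in[m_I]$ and $A(\gamma^* )\succ 0$. *)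

theory Defs
  imports "HOL-Analysis.Analysis" "HOL-Library.Extended_Real"
begin

text \<open>Vectors in R^N are real^'n; matrices in S^N are real^'n^'n.
  The (N+1)x(N+1) block matrices are indexed by 'n option, with None the extra
  (first) row/column.\<close>

definition sym_mat :: "real^'k^'k \<Rightarrow> bool" where
  "sym_mat M \<longleftrightarrow> transpose M = M"

definition psd :: "real^'k^'k \<Rightarrow> bool" where
  "psd M \<longleftrightarrow> sym_mat M \<and> (\<forall>v. 0 \<le> v \<bullet> (M *v v))"

definition pd :: "real^'k^'k \<Rightarrow> bool" where
  "pd M \<longleftrightarrow> sym_mat M \<and> (\<forall>v. v \<noteq> 0 \<longrightarrow> 0 < v \<bullet> (M *v v))"

definition blk :: "real \<Rightarrow> real^'n \<Rightarrow> real^'n^'n \<Rightarrow> real^('n option)^('n option)" where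
  "blk c b A = (\<chi> i j. case i of
       None \<Rightarrow> (case j of None \<Rightarrow> c | Some j' \<Rightarrow> b $ j')
     | Some i' \<Rightarrow> (case j of None \<Rightarrow> b $ i' | Some j' \<Rightarrow> A $ i' $ j'))"

definition frob :: "real^'k^'k \<Rightarrow> real^'k^'k \<Rightarrow> real" where
  "frob M Y = (\<Sum>i\<in>UNIV. \<Sum>j\<in>UNIV. M $ i $ j * Y $ i $ j)"

definition qf :: "real^'n^'n \<Rightarrow> real^'n \<Rightarrow> real \<Rightarrow> real^'n \<Rightarrow> real" where
  "qf A b c x = x \<bullet> (A *v x) + 2 * (b \<bullet> x) + c"

text \<open>Data: constraints are indexed by i in [0,m], m = mI + mE;
  inequalities are i in [1,mI], equalities i in [mI+1,m].\<close>

definition Qmat :: "(nat \<Rightarrow> real^'n^'n) \<Rightarrow> (nat \<Rightarrow> real^'n) \<Rightarrow> (nat \<Rightarrow> real) \<Rightarrow> nat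
   \<Rightarrow> real^('n option)^('n option)" where
  "Qmat A b c i = blk (c i) (b i) (A i)"

definition sdp_feas :: "nat \<Rightarrow> nat \<Rightarrow> (nat \<Rightarrow> real^'n^'n) \<Rightarrow> (nat \<Rightarrow> real^'n) \<Rightarrow> (nat \<Rightarrow> real)
   \<Rightarrow> real^'n \<Rightarrow> real^'n^'n \<Rightarrow> bool" where
  "sdp_feas mI mE A b c x X \<longleftrightarrow> sym_mat X
     \<and> (\<forall>i\<in>{1..mI}. frob (Qmat A b c i) (blk 1 x X) \<le> 0)
     \<and> (\<forall>i\<in>{mI+1..mI+mE}. frob (Qmat A b c i) (blk 1 x X) = 0)
     \<and> psd (blk 1 x X)"

definition Opt_SDP :: "nat \<Rightarrow> nat \<Rightarrow> (nat \<Rightarrow> real^'n^'n) \<Rightarrow> (nat \<Rightarrow> real^'n) \<Rightarrow> (nat \<Rightarrow> real)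
   \<Rightarrow> ereal" where
  "Opt_SDP mI mE A b c = Inf {ereal (frob (Qmat A b c 0) (blk 1 x X)) | x X. sdp_feas mI mE A b c x X}"

definition D_SDP :: "nat \<Rightarrow> nat \<Rightarrow> (nat \<Rightarrow> real^'n^'n) \<Rightarrow> (nat \<Rightarrow> real^'n) \<Rightarrow> (nat \<Rightarrow> real)
   \<Rightarrow> ((real^'n) \<times> real) set" where
  "D_SDP mI mE A b c = {(x, t). \<exists>X. sdp_feas mI mE A b c x X
       \<and> frob (Qmat A b c 0) (blk 1 x X) \<le> 2 * t}"

definition Amat :: "nat \<Rightarrow> (nat \<Rightarrow> real^'n^'n) \<Rightarrow> (nat \<Rightarrow> real) \<Rightarrow> real^'n^'n" where
  "Amat m A \<gamma> = A 0 + (\<Sum>i\<in>{1..m}. \<gamma> i *\<^sub>R A i)"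

definition qgam :: "nat \<Rightarrow> (nat \<Rightarrow> real^'n^'n) \<Rightarrow> (nat \<Rightarrow> real^'n) \<Rightarrow> (nat \<Rightarrow> real)
   \<Rightarrow> (nat \<Rightarrow> real) \<Rightarrow> real^'n \<Rightarrow> real" where
  "qgam m A b c \<gamma> x = qf (A 0) (b 0) (c 0) x + (\<Sum>i\<in>{1..m}. \<gamma> i * qf (A i) (b i) (c i) x)"

text \<open>Gamma, with gamma in R^m represented as a function nat => real vanishing outside [1,m].\<close>
definition Gam :: "nat \<Rightarrow> nat \<Rightarrow> (nat \<Rightarrow> real^'n^'n) \<Rightarrow> (nat \<Rightarrow> real) set" where
  "Gam mI mE A = {\<gamma>. (\<forall>i. i \<notin> {1..mI+mE} \<longrightarrow> \<gamma> i = 0)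
       \<and> psd (Amat (mI+mE) A \<gamma>) \<and> (\<forall>i\<in>{1..mI}. 0 \<le> \<gamma> i)}"

definition supq :: "nat \<Rightarrow> nat \<Rightarrow> (nat \<Rightarrow> real^'n^'n) \<Rightarrow> (nat \<Rightarrow> real^'n) \<Rightarrow> (nat \<Rightarrow> real)
   \<Rightarrow> real^'n \<Rightarrow> ereal" where
  "supq mI mE A b c x = (SUP \<gamma>\<in>Gam mI mE A. ereal (qgam (mI+mE) A b c \<gamma> x))"

end

theory Submission
  imports Defs
begin

(* For Y = [1 x^T; x X] feasible and gamma in Gamma,
   <Q_0,Y> - q(gamma,x) = <A(gamma), X - x x^T> - sum_i gamma_i <Q_i,Y> >= 0,
   because the Schur complement X - x x^T of Y is psd and the trace pairing of two psd matrices
   is nonnegative (weak duality).  Conversely, if q(gamma,x) <= 2t on Gamma, no admissible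
   combination of the A_i that is psd makes the matching combination of the right-hand sides
   negative; separating this cone from the psd cone yields a psd Z such that X = x x^T + Z puts
   (x,t) in D_SDP, where Assumption A excludes the vertical hyperplane.  Finally q(gamma*,.) is a
   strongly convex quadratic below sup_Gamma q(.,x), so this supremum of continuous functions has
   bounded closed sublevel sets and attains its infimum, which is Opt_SDP by the first part. *)

lemma frob_comm: "frob M Y = frob Y M"
  unfolding frob_def by (simp add: mult.commute)

lemma frob_add_left: "frob (M + N) Y = frob M Y + frob N Y"
  unfolding frob_def by (simp add: algebra_simps sum.distrib)

lemma frob_add_right: "frob Y (M + N) = frob Y M + frob Y N"
  unfolding frob_def by (simp add: algebra_simps sum.distrib)

lemma frob_diff_left: "frob (M - N) Y = frob M Y - frob N Y"
  unfolding frob_def by (simp add: algebra_simps sum_subtractf)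

lemma frob_diff_right: "frob Y (M - N) = frob Y M - frob Y N"
  unfolding frob_def by (simp add: algebra_simps sum_subtractf)

lemma frob_scaleR_left: "frob (c *\<^sub>R M) Y = c * frob M Y"
  unfolding frob_def by (simp add: algebra_simps sum_distrib_left)

lemma frob_scaleR_right: "frob Y (c *\<^sub>R M) = c * frob Y M"
  unfolding frob_def by (simp add: algebra_simps sum_distrib_left)

lemma frob_zero_left [simp]: "frob 0 Y = 0"
  unfolding frob_def by simp

lemma frob_zero_right [simp]: "frob Y 0 = 0"
  unfolding frob_def by simp

lemma frob_uminus_right: "frob Y (- M) = - frob Y M"
  unfolding frob_def by (simp add: sum_negf)

lemma frob_sum_left: "frob (\<Sum>i\<in>S. f i) Y = (\<Sum>i\<in>S. frob (f i) Y)"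
  by (induction S rule: infinite_finite_induct) (auto simp: frob_add_left)

lemma inner_eq_frob: "(Y::real^'n^'n) \<bullet> W = frob Y W"
  unfolding frob_def inner_vec_def by simp

definition outer :: "real^'n \<Rightarrow> real^'n^'n" where
  "outer v = (\<chi> i j. v$i * v$j)"

lemma quad_eq_frob_outer: "v \<bullet> (M *v v) = frob M (outer v)"
  unfolding frob_def inner_vec_def matrix_vector_mult_def outer_def
  by (simp add: sum_distrib_left algebra_simps)

lemma frob_transpose: "frob (transpose M) Y = frob M (transpose Y)"
  unfolding frob_def transpose_def by (simp, subst sum.swap, simp add: mult.commute)

lemma frob_outer_outer: "frob (outer x) (outer w) = (x \<bullet> w)^2"
proof -
  have "(x \<bullet> w)^2 = (\<Sum>i\<in>UNIV. x$i * w$i) * (\<Sum>j\<in>UNIV. x$j * w$j)"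
    unfolding inner_vec_def power2_eq_square by simp
  also have "\<dots> = (\<Sum>i\<in>UNIV. \<Sum>j\<in>UNIV. (x$i * w$i) * (x$j * w$j))"
    by (rule sum_product)
  finally show ?thesis unfolding frob_def outer_def by (simp add: mult_ac)
qed

lemma sym_mat_outer: "sym_mat (outer x)"
  by (simp add: sym_mat_def vec_eq_iff transpose_def outer_def mult.commute)

lemma sym_mat_add: "sym_mat A \<Longrightarrow> sym_mat B \<Longrightarrow> sym_mat (A + B)"
  by (simp add: sym_mat_def vec_eq_iff transpose_def)

lemma sym_mat_diff: "sym_mat A \<Longrightarrow> sym_mat B \<Longrightarrow> sym_mat (A - B)"
  by (simp add: sym_mat_def vec_eq_iff transpose_def)

lemma sym_mat_scaleR: "sym_mat A \<Longrightarrow> sym_mat (c *\<^sub>R A)"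
  by (simp add: sym_mat_def transpose_scalar)

lemma sym_mat_sum: "(\<And>i. i \<in> S \<Longrightarrow> sym_mat (f i)) \<Longrightarrow> sym_mat (\<Sum>i\<in>S. f i)"
  by (induction S rule: infinite_finite_induct)
     (auto simp: sym_mat_add sym_mat_def transpose_def vec_eq_iff)

lemma sym_mat_symmetrize: "sym_mat (Y + transpose (Y::real^'n^'n))"
  by (simp add: sym_mat_def vec_eq_iff transpose_def)

lemma pd_imp_psd: "pd M \<Longrightarrow> psd M"
  unfolding pd_def psd_def by (metis inner_zero_left order_le_less)

subsection \<open>Block matrices and the Schur complement\<close>

lemma sum_UNIV_option:
  fixes f :: "'n::finite option \<Rightarrow> 'a::comm_monoid_add"
  shows "(\<Sum>j\<in>UNIV. f j) = f None + (\<Sum>i\<in>UNIV. f (Some i))"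
proof -
  have "sum f UNIV = sum f (insert None (range Some))" by (metis UNIV_option_conv)
  also have "\<dots> = f None + sum f (range Some)" by (rule sum.insert) auto
  also have "sum f (range Some) = (\<Sum>i\<in>UNIV. f (Some i))" by (simp add: sum.reindex)
  finally show ?thesis .
qed

lemma frob_blk: "frob (blk c b A) (blk c' b' A') = c*c' + 2*(b \<bullet> b') + frob A A'"
  unfolding frob_def blk_def inner_vec_def
  by (simp add: sum_UNIV_option sum.distrib algebra_simps sum_distrib_left mult.commute)

lemma outer_blk:
  "outer v = blk (v$None * v$None) ((v$None) *\<^sub>R (\<chi> i. v$Some i)) (outer (\<chi> i. v$Some i))"
  unfolding outer_def blk_def by (simp add: vec_eq_iff split: option.splits)

lemma sym_mat_blk: "sym_mat (blk c b A) \<longleftrightarrow> sym_mat A"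
  unfolding sym_mat_def blk_def transpose_def
  by (auto simp: vec_eq_iff split: option.splits)

lemma quad_blk:
  "v \<bullet> (blk 1 x X *v v) =
     (v$None)^2 + 2 * v$None * (x \<bullet> (\<chi> i. v$Some i)) + frob X (outer (\<chi> i. v$Some i))"
  unfolding quad_eq_frob_outer outer_blk[of v] frob_blk by (simp add: power2_eq_square)

lemma quad_diff_outer: "w \<bullet> ((X - outer x) *v w) = frob X (outer w) - (x \<bullet> w)^2"
  unfolding quad_eq_frob_outer frob_diff_left frob_outer_outer ..

lemma psd_blk_iff:
  fixes x :: "real^'n"
  shows "psd (blk 1 x X) \<longleftrightarrow> sym_mat X \<and> psd (X - outer x)"
proof
  assume psdY: "psd (blk 1 x X)"
  have "0 \<le> w \<bullet> ((X - outer x) *v w)" for w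
  proof -
    define v :: "real^('n option)"
      where "v = (\<chi> j. case j of None \<Rightarrow> -(x \<bullet> w) | Some i \<Rightarrow> w$i)"
    have "(\<chi> i. v$Some i) = w" "v$None = -(x \<bullet> w)" by (simp_all add: v_def vec_eq_iff)
    then have "v \<bullet> (blk 1 x X *v v) = w \<bullet> ((X - outer x) *v w)"
      unfolding quad_blk quad_diff_outer by (simp add: power2_eq_square)
    with psdY show ?thesis unfolding psd_def by metis
  qed
  with psdY show "sym_mat X \<and> psd (X - outer x)"
    by (simp add: psd_def sym_mat_blk sym_mat_diff sym_mat_outer)
next
  assume *: "sym_mat X \<and> psd (X - outer x)"
  have "0 \<le> v \<bullet> (blk 1 x X *v v)" for v
  proof -
    define w where "w = (\<chi> i. v$Some i)"
    have "0 \<le> frob X (outer w) - (x \<bullet> w)^2"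
      using * by (simp add: psd_def flip: quad_diff_outer)
    moreover have "v \<bullet> (blk 1 x X *v v) = (v$None + x \<bullet> w)^2 + (frob X (outer w) - (x \<bullet> w)^2)"
      unfolding quad_blk w_def by (simp add: power2_eq_square algebra_simps)
    ultimately show ?thesis by (metis add_nonneg_nonneg zero_le_power2)
  qed
  with * show "psd (blk 1 x X)" by (simp add: psd_def sym_mat_blk)
qed

subsection \<open>The trace pairing of positive semidefinite matrices\<close>

definition quad_form :: "('a \<Rightarrow> 'a \<Rightarrow> real) \<Rightarrow> 'a set \<Rightarrow> ('a \<Rightarrow> real) \<Rightarrow> real" where
  "quad_form M S w = (\<Sum>i\<in>S. \<Sum>j\<in>S. w i * M i j * w j)"

definition psd_on :: "'a set \<Rightarrow> ('a \<Rightarrow> 'a \<Rightarrow> real) \<Rightarrow> bool" where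
  "psd_on S M \<longleftrightarrow> (\<forall>w. 0 \<le> quad_form M S w)"

lemma double_sum_insert:
  assumes "finite S" "k \<notin> S"
  shows "(\<Sum>i\<in>insert k S. \<Sum>j\<in>insert k S. g i j) =
    g k k + (\<Sum>j\<in>S. g k j) + (\<Sum>i\<in>S. g i k) + (\<Sum>i\<in>S. \<Sum>j\<in>S. g i j)"
  using assms by (simp add: sum.distrib add_ac)

lemma quad_form_insert:
  assumes "finite S" "k \<notin> S"
  shows "quad_form M (insert k S) w = w k * w k * M k k + w k * (\<Sum>j\<in>S. M k j * w j)
     + w k * (\<Sum>i\<in>S. w i * M i k) + quad_form M S w"
  unfolding quad_form_def double_sum_insert[OF assms]
  by (simp add: sum_distrib_left sum_distrib_right algebra_simps)

lemma quad_form_cong: "(\<And>i. i \<in> S \<Longrightarrow> v i = w i) \<Longrightarrow> quad_form M S v = quad_form M S w"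
  unfolding quad_form_def by simp

lemma quad_form_insert_update:
  assumes "finite S" "k \<notin> S" and symM: "\<forall>i j. M i j = M j i"
  shows "quad_form M (insert k S) (w(k := s)) =
    s * s * M k k + 2 * s * (\<Sum>j\<in>S. M k j * w j) + quad_form M S w"
proof -
  have "quad_form M S (w(k := s)) = quad_form M S w"
    by (rule quad_form_cong) (use assms in auto)
  moreover have "(\<Sum>j\<in>S. M k j * (w(k := s)) j) = (\<Sum>j\<in>S. M k j * w j)"
    by (rule sum.cong) (use assms in auto)
  moreover have "(\<Sum>i\<in>S. (w(k := s)) i * M i k) = (\<Sum>j\<in>S. M k j * w j)"
    by (rule sum.cong) (use assms in \<open>auto simp: mult.commute\<close>)
  ultimately show ?thesis unfolding quad_form_insert[OF assms(1,2)] by simp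
qed

lemma psd_on_insertD:
  assumes "finite S" "k \<notin> S" "psd_on (insert k S) M"
  shows "psd_on S M"
  unfolding psd_on_def
proof
  fix w
  have "quad_form M (insert k S) (w(k := 0)) = quad_form M S (w(k := 0))"
    unfolding quad_form_insert[OF assms(1,2)] by simp
  also have "\<dots> = quad_form M S w" by (rule quad_form_cong) (use assms in auto)
  finally show "0 \<le> quad_form M S w" using assms(3) unfolding psd_on_def by metis
qed

lemma psd_on_diagonal_nonneg:
  assumes "finite S" "k \<notin> S" "\<forall>i j. M i j = M j i" "psd_on (insert k S) M"
  shows "0 \<le> M k k"
proof -
  have "quad_form M (insert k S) ((\<lambda>_. 0)(k := 1)) = M k k"
    unfolding quad_form_insert_update[OF assms(1-3)] by (simp add: quad_form_def)
  then show ?thesis using assms(4) unfolding psd_on_def by metis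
qed

lemma psd_on_zero_diagonal_row:
  assumes "finite S" "k \<notin> S" "\<forall>i j. M i j = M j i" "psd_on (insert k S) M" "M k k = 0"
  shows "(\<Sum>j\<in>S. M k j * w j) = 0"
proof (rule ccontr)
  let ?L = "\<Sum>j\<in>S. M k j * w j"
  assume "?L \<noteq> 0"
  define s where "s = - (\<bar>quad_form M S w\<bar> + 1) / (2 * ?L)"
  have "2 * s * ?L = - (\<bar>quad_form M S w\<bar> + 1)" using \<open>?L \<noteq> 0\<close> by (simp add: s_def)
  then have "quad_form M (insert k S) (w(k := s)) < 0"
    unfolding quad_form_insert_update[OF assms(1-3)] assms(5) by simp
  with assms(4) show False unfolding psd_on_def by (metis not_le)
qed

lemma psd_on_schur_complement:
  assumes "finite S" "k \<notin> S" and symM: "\<forall>i j. M i j = M j i"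
    and "psd_on (insert k S) M" "0 < M k k"
  shows "psd_on S (\<lambda>i j. M i j - M i k * M k j / M k k)"
  unfolding psd_on_def
proof
  fix w
  let ?L = "\<Sum>j\<in>S. M k j * w j"
  have "quad_form (\<lambda>i j. M i j - M i k * M k j / M k k) S w =
      quad_form M S w - (\<Sum>i\<in>S. \<Sum>j\<in>S. (w i * M i k) * (M k j * w j)) / M k k"
    unfolding quad_form_def by (simp add: algebra_simps sum_subtractf sum_divide_distrib)
  also have "(\<Sum>i\<in>S. \<Sum>j\<in>S. (w i * M i k) * (M k j * w j)) = (\<Sum>i\<in>S. w i * M i k) * ?L"
    by (simp add: sum_product)
  also have "(\<Sum>i\<in>S. w i * M i k) = ?L"
    using symM by (simp add: mult.commute)
  also have "quad_form M S w - ?L * ?L / M k k = quad_form M (insert k S) (w(k := - ?L / M k k))"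
    unfolding quad_form_insert_update[OF assms(1-3)] using assms(5)
    by (simp add: field_simps power2_eq_square)
  finally show "0 \<le> quad_form (\<lambda>i j. M i j - M i k * M k j / M k k) S w"
    using assms(4) unfolding psd_on_def by metis
qed

lemma pairing_insert_schur:
  assumes "finite S" "k \<notin> S" and symM: "\<forall>i j. M i j = M j i" and "M k k \<noteq> 0"
  shows "(\<Sum>i\<in>insert k S. \<Sum>j\<in>insert k S. M i j * Z i j) =
    (\<Sum>i\<in>S. \<Sum>j\<in>S. (M i j - M i k * M k j / M k k) * Z i j) + quad_form Z (insert k S) (M k) / M k k"
proof -
  have sum_sym: "(\<Sum>i\<in>S. M i k * Z i k) = (\<Sum>i\<in>S. M k i * Z i k)"
    using symM by simp
  have "quad_form Z S (M k) = (\<Sum>i\<in>S. \<Sum>j\<in>S. (M i k * M k j) * Z i j)"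
    unfolding quad_form_def using symM by (simp add: mult_ac)
  then have "quad_form Z (insert k S) (M k) = M k k * (M k k * Z k k + (\<Sum>j\<in>S. M k j * Z k j)
      + (\<Sum>i\<in>S. M k i * Z i k)) + (\<Sum>i\<in>S. \<Sum>j\<in>S. (M i k * M k j) * Z i j)"
    unfolding quad_form_insert[OF assms(1,2)] by (simp add: algebra_simps sum_distrib_left)
  moreover have "(\<Sum>i\<in>S. \<Sum>j\<in>S. M i j * Z i j) = (\<Sum>i\<in>S. \<Sum>j\<in>S. (M i j - M i k * M k j / M k k) * Z i j)
      + (\<Sum>i\<in>S. \<Sum>j\<in>S. (M i k * M k j) * Z i j) / M k k"
    using assms(4) by (simp add: algebra_simps sum_subtractf sum_divide_distrib sum.distrib)
  ultimately show ?thesis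
    unfolding double_sum_insert[OF assms(1,2)] sum_sym using assms(4) by (simp add: field_simps)
qed

text \<open>Eliminating one index of M by its Schur complement reduces the claim to a smaller index set.\<close>

lemma psd_on_pairing_nonneg:
  assumes "finite S" "\<forall>i j. M i j = M j i" "psd_on S M" "psd_on S Z"
  shows "0 \<le> (\<Sum>i\<in>S. \<Sum>j\<in>S. M i j * Z i j)"
  using assms
proof (induction S arbitrary: M rule: finite_induct)
  case empty
  then show ?case by simp
next
  case (insert k S)
  have ZS: "psd_on S Z" using psd_on_insertD[OF insert.hyps insert.prems(3)] .
  have "0 \<le> M k k" using psd_on_diagonal_nonneg[OF insert.hyps insert.prems(1,2)] .
  then consider "M k k = 0" | "0 < M k k" by linarith
  then show ?case
  proof cases
    case 1
    have row: "(\<Sum>j\<in>S. M k j * w j) = 0" for w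
      using psd_on_zero_diagonal_row[OF insert.hyps insert.prems(1,2) 1] .
    have "(\<Sum>i\<in>S. M i k * Z i k) = (\<Sum>i\<in>S. M k i * Z i k)" using insert.prems(1) by simp
    then have "(\<Sum>i\<in>insert k S. \<Sum>j\<in>insert k S. M i j * Z i j) = (\<Sum>i\<in>S. \<Sum>j\<in>S. M i j * Z i j)"
      unfolding double_sum_insert[OF insert.hyps] using row[of "Z k"] row[of "\<lambda>i. Z i k"] 1 by simp
    moreover have "0 \<le> (\<Sum>i\<in>S. \<Sum>j\<in>S. M i j * Z i j)"
      using insert.IH[OF insert.prems(1) psd_on_insertD[OF insert.hyps insert.prems(2)] ZS] .
    ultimately show ?thesis by simp
  next
    case 2
    let ?M' = "\<lambda>i j. M i j - M i k * M k j / M k k"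
    have "0 \<le> (\<Sum>i\<in>S. \<Sum>j\<in>S. ?M' i j * Z i j)"
    proof (rule insert.IH)
      show "\<forall>i j. ?M' i j = ?M' j i" using insert.prems(1) by (simp add: mult.commute)
      show "psd_on S ?M'" using psd_on_schur_complement[OF insert.hyps insert.prems(1,2) 2] .
    qed (rule ZS)
    moreover have "0 \<le> quad_form Z (insert k S) (M k)" using insert.prems(3) by (simp add: psd_on_def)
    moreover have "M k k \<noteq> 0" using 2 by simp
    ultimately show ?thesis
      unfolding pairing_insert_schur[OF insert.hyps insert.prems(1) \<open>M k k \<noteq> 0\<close>] using 2 by simp
  qed
qed

lemma quad_form_vec: "quad_form (\<lambda>i j. M$i$j) UNIV w = (\<chi> i. w i) \<bullet> (M *v (\<chi> i. w i))"
  unfolding quad_eq_frob_outer quad_form_def frob_def outer_def by (simp add: algebra_simps)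

lemma psd_frob_nonneg:
  fixes M Z :: "real^'n^'n"
  assumes "psd M" "\<forall>v. 0 \<le> v \<bullet> (Z *v v)"
  shows "0 \<le> frob M Z"
  unfolding frob_def
proof (rule psd_on_pairing_nonneg)
  show "\<forall>i j. M$i$j = M$j$i" using assms(1) unfolding psd_def sym_mat_def transpose_def
    by (metis vec_lambda_beta)
  show "psd_on UNIV (\<lambda>i j. M$i$j)" "psd_on UNIV (\<lambda>i j. Z$i$j)"
    using assms by (simp_all add: psd_on_def quad_form_vec psd_def)
qed simp

lemma quad_scaleR:
  fixes P :: "real^'n^'n"
  shows "(c *\<^sub>R v) \<bullet> (P *v (c *\<^sub>R v)) = c^2 * (v \<bullet> (P *v v))"
proof -
  have "P *v (c *\<^sub>R v) = c *\<^sub>R (P *v v)"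
    by (simp add: vec_eq_iff matrix_vector_mult_def sum_distrib_left algebra_simps)
  then show ?thesis by (simp add: power2_eq_square)
qed

lemma pd_quad_lower_bound:
  fixes P :: "real^'n^'n"
  assumes "pd P"
  obtains \<mu> where "\<mu> > 0" "\<And>v. \<mu> * (v \<bullet> v) \<le> v \<bullet> (P *v v)"
proof -
  let ?f = "\<lambda>v::real^'n. v \<bullet> (P *v v)"
  have cont: "continuous_on (sphere 0 1) ?f"
    by (intro continuous_intros matrix_vector_mult_linear_continuous_on)
  have "sphere (0::real^'n) 1 \<noteq> {}" by (simp add: sphere_eq_empty)
  then obtain v0 where v0: "v0 \<in> sphere 0 1" "\<And>v. v \<in> sphere 0 1 \<Longrightarrow> ?f v0 \<le> ?f v"
    using continuous_attains_inf[OF compact_sphere _ cont] by blast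
  have "v0 \<noteq> 0" using v0(1) by auto
  then have "?f v0 > 0" using assms by (simp add: pd_def)
  then show ?thesis
  proof (rule that)
    fix v :: "real^'n"
    show "?f v0 * (v \<bullet> v) \<le> ?f v"
    proof (cases "v = 0")
      case False
      define u where "u = (1 / norm v) *\<^sub>R v"
      have "u \<in> sphere 0 1" using False by (simp add: u_def)
      then have "?f v0 \<le> ?f u" by (rule v0(2))
      have "v = norm v *\<^sub>R u" using False by (simp add: u_def)
      then have "?f v = (norm v)^2 * ?f u" by (metis quad_scaleR)
      moreover have "v \<bullet> v = (norm v)^2" by (simp add: power2_norm_eq_inner)
      ultimately show ?thesis using \<open>?f v0 \<le> ?f u\<close>
        by (metis mult.commute mult_right_mono zero_le_power2)
    qed simp
  qed
qed

lemma quad_upper_bound: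
  fixes Y :: "real^'n^'n"
  obtains B where "B > 0" "\<And>v. \<bar>v \<bullet> (Y *v v)\<bar> \<le> B * (v \<bullet> v)"
proof -
  obtain B where B: "B > 0" "\<And>x. norm (Y *v x) \<le> B * norm x"
    using linear_bounded_pos[OF matrix_vector_mul_linear] by blast
  show ?thesis
  proof (rule that[OF B(1)])
    fix v :: "real^'n"
    have "\<bar>v \<bullet> (Y *v v)\<bar> \<le> norm v * norm (Y *v v)" by (rule Cauchy_Schwarz_ineq2)
    also have "\<dots> \<le> norm v * (B * norm v)" by (rule mult_left_mono[OF B(2)]) simp
    also have "\<dots> = B * (v \<bullet> v)" by (simp add: power2_norm_eq_inner[symmetric] power2_eq_square)
    finally show "\<bar>v \<bullet> (Y *v v)\<bar> \<le> B * (v \<bullet> v)" .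
  qed
qed

lemma pd_qf_sublevel_bounded:
  assumes "pd P"
  shows "bounded {x. qf P b c x \<le> C}"
proof -
  obtain \<mu> where \<mu>: "\<mu> > 0" "\<And>v. \<mu> * (v \<bullet> v) \<le> v \<bullet> (P *v v)"
    using pd_quad_lower_bound[OF assms] by blast
  define R where "R = max 1 ((2 * norm b + \<bar>C - c\<bar>) / \<mu>)"
  have "norm x \<le> R" if "qf P b c x \<le> C" for x
  proof (rule ccontr)
    assume "\<not> norm x \<le> R"
    then have big: "R < norm x" and "1 < norm x" unfolding R_def by auto
    have "\<bar>b \<bullet> x\<bar> \<le> norm b * norm x" by (rule Cauchy_Schwarz_ineq2)
    moreover have "\<mu> * (norm x)^2 \<le> x \<bullet> (P *v x)" using \<mu>(2)[of x] by (simp add: power2_norm_eq_inner)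
    ultimately have "\<mu> * (norm x)^2 \<le> 2 * norm b * norm x + \<bar>C - c\<bar>"
      using that unfolding qf_def by linarith
    also have "\<dots> \<le> (2 * norm b + \<bar>C - c\<bar>) * norm x"
      using \<open>1 < norm x\<close> mult_right_mono[of 1 "norm x" "\<bar>C - c\<bar>"] by (simp add: algebra_simps)
    finally have "(\<mu> * norm x) * norm x \<le> (2 * norm b + \<bar>C - c\<bar>) * norm x"
      by (simp add: power2_eq_square mult.assoc)
    then have "\<mu> * norm x \<le> 2 * norm b + \<bar>C - c\<bar>"
      by (rule mult_right_le_imp_le) (use \<open>1 < norm x\<close> in linarith)
    then have "norm x \<le> (2 * norm b + \<bar>C - c\<bar>) / \<mu>" using \<mu>(1) by (simp add: field_simps)
    then show False using big unfolding R_def by simp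
  qed
  then show ?thesis unfolding bounded_iff by blast
qed

subsection \<open>A theorem of the alternative for linear matrix inequalities\<close>

lemma conic_separation:
  fixes A :: "nat \<Rightarrow> real^'n^'n" and r :: "nat \<Rightarrow> real"
  assumes symA: "\<forall>i\<in>{0..m}. sym_mat (A i)"
    and hyp: "\<And>l. 0 \<le> l 0 \<Longrightarrow> (\<forall>i\<in>{1..mI}. 0 \<le> l i) \<Longrightarrow> psd (\<Sum>i\<in>{0..m}. l i *\<^sub>R A i)
                 \<Longrightarrow> 0 \<le> (\<Sum>i\<in>{0..m}. l i * r i)"
  obtains Y \<tau> where "(Y, \<tau>) \<noteq> 0" "\<tau> \<le> 0"
    "\<And>l. 0 \<le> l 0 \<Longrightarrow> (\<forall>i\<in>{1..mI}. 0 \<le> l i) \<Longrightarrow>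
       frob Y (\<Sum>i\<in>{0..m}. l i *\<^sub>R A i) + \<tau> * (\<Sum>i\<in>{0..m}. l i * r i) \<le> 0"
    "\<And>W. (\<forall>v. 0 \<le> v \<bullet> (W *v v)) \<Longrightarrow> 0 \<le> frob Y W"
proof -
  define L where "L = {l::nat\<Rightarrow>real. 0 \<le> l 0 \<and> (\<forall>i\<in>{1..mI}. 0 \<le> l i)}"
  define F where "F = (\<lambda>l::nat\<Rightarrow>real. ((\<Sum>i\<in>{0..m}. l i *\<^sub>R A i), (\<Sum>i\<in>{0..m}. l i * r i)))"
  define T where "T = {p::((real^'n^'n) \<times> real). (\<forall>v. 0 \<le> v \<bullet> (fst p *v v)) \<and> snd p < 0}"
  have F_scale: "F (\<lambda>i. k * l i) = k *\<^sub>R F l" for k l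
    unfolding F_def by (simp add: scaleR_sum_right sum_distrib_left mult.assoc)
  have F_add: "F (\<lambda>i. l1 i + l2 i) = F l1 + F l2" for l1 l2
    unfolding F_def by (simp add: scaleR_add_left sum.distrib algebra_simps)
  have "convex (F ` L)"
  proof (rule convexI)
    fix x y and u v :: real
    assume "x \<in> F ` L" "y \<in> F ` L" "0 \<le> u" "0 \<le> v"
    then obtain l1 l2 where l: "l1 \<in> L" "x = F l1" "l2 \<in> L" "y = F l2" by blast
    have "u *\<^sub>R x + v *\<^sub>R y = F (\<lambda>i. u * l1 i + v * l2 i)"
      using F_add[of "\<lambda>i. u * l1 i" "\<lambda>i. v * l2 i"] F_scale[of u l1] F_scale[of v l2] l by simp
    moreover have "(\<lambda>i. u * l1 i + v * l2 i) \<in> L"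
      using l \<open>0 \<le> u\<close> \<open>0 \<le> v\<close> by (simp add: L_def)
    ultimately show "u *\<^sub>R x + v *\<^sub>R y \<in> F ` L" by simp
  qed
  moreover have "convex T"
  proof (rule convexI)
    fix x y and u v :: real
    assume "x \<in> T" "y \<in> T" "0 \<le> u" "0 \<le> v" "u + v = 1"
    let ?s = "max (snd x) (snd y)"
    have "u * snd x + v * snd y \<le> u * ?s + v * ?s"
      using \<open>0 \<le> u\<close> \<open>0 \<le> v\<close> by (intro add_mono mult_left_mono) auto
    also have "\<dots> < 0" using \<open>u + v = 1\<close> \<open>x \<in> T\<close> \<open>y \<in> T\<close> by (simp add: T_def flip: distrib_right)
    finally have "u * snd x + v * snd y < 0" .
    moreover have "0 \<le> w \<bullet> ((u *\<^sub>R fst x + v *\<^sub>R fst y) *v w)" for w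
      using \<open>x \<in> T\<close> \<open>y \<in> T\<close> \<open>0 \<le> u\<close> \<open>0 \<le> v\<close>
      by (simp add: T_def quad_eq_frob_outer frob_add_left frob_scaleR_left)
    ultimately show "u *\<^sub>R x + v *\<^sub>R y \<in> T" by (simp add: T_def)
  qed
  moreover have "(0, -1) \<in> T" unfolding T_def by simp
  moreover have "F ` L \<inter> T = {}"
  proof (intro equals0I)
    fix p assume "p \<in> F ` L \<inter> T"
    then obtain l where l: "l \<in> L" "F l \<in> T" by blast
    have "sym_mat (fst (F l))"
      unfolding F_def using symA by (auto intro!: sym_mat_sum sym_mat_scaleR)
    with l have "0 \<le> snd (F l)" using hyp[of l] by (simp add: L_def F_def T_def psd_def)
    with l show False by (simp add: T_def)
  qed
  moreover have "F ` L \<noteq> {}" unfolding L_def by auto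
  ultimately obtain a b where ab: "a \<noteq> 0" "\<forall>x\<in>F ` L. a \<bullet> x \<le> b" "\<forall>x\<in>T. b \<le> a \<bullet> x"
    using separating_hyperplane_sets[of "F ` L" T] by blast
  obtain Y \<tau> where a: "a = (Y, \<tau>)" by (cases a)
  have a_inner: "a \<bullet> p = frob Y (fst p) + \<tau> * snd p" for p
    unfolding a by (cases p) (simp add: inner_Pair inner_eq_frob)
  have "(\<lambda>_. 0) \<in> L" unfolding L_def by simp
  then have "a \<bullet> F (\<lambda>_. 0) \<le> b" using ab(2) by blast
  then have "0 \<le> b" unfolding F_def by (simp flip: zero_prod_def)
  show ?thesis
  proof (rule that)
    show "(Y, \<tau>) \<noteq> 0" using ab(1) a by simp
    have "b \<le> a \<bullet> (0, -1)" using ab(3) \<open>(0, -1) \<in> T\<close> by blast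
    then show "\<tau> \<le> 0" using \<open>0 \<le> b\<close> unfolding a_inner by simp
  next
    text \<open>The left side is a cone, so a positive value of the functional could be scaled above b.\<close>
    fix l :: "nat \<Rightarrow> real"
    assume "0 \<le> l 0" "\<forall>i\<in>{1..mI}. 0 \<le> l i"
    then have "l \<in> L" by (simp add: L_def)
    show "frob Y (\<Sum>i\<in>{0..m}. l i *\<^sub>R A i) + \<tau> * (\<Sum>i\<in>{0..m}. l i * r i) \<le> 0"
    proof (rule ccontr)
      let ?s = "a \<bullet> F l"
      assume "\<not> ?thesis"
      then have "0 < ?s" unfolding a_inner by (simp add: F_def)
      define k where "k = (b + 1) / ?s"
      have "0 < k" using \<open>0 < ?s\<close> \<open>0 \<le> b\<close> by (simp add: k_def)
      then have "(\<lambda>i. k * l i) \<in> L" using \<open>l \<in> L\<close> by (simp add: L_def)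
      then have "a \<bullet> F (\<lambda>i. k * l i) \<le> b" using ab(2) by blast
      moreover have "a \<bullet> F (\<lambda>i. k * l i) = k * ?s" by (simp add: F_scale)
      moreover have "k * ?s = b + 1" using \<open>0 < ?s\<close> by (simp add: k_def)
      ultimately show False by simp
    qed
  next
    fix W :: "real^'n^'n"
    assume W: "\<forall>v. 0 \<le> v \<bullet> (W *v v)"
    show "0 \<le> frob Y W"
    proof (rule ccontr)
      assume "\<not> ?thesis"
      then have neg: "frob Y W < 0" by simp
      define k where "k = (\<bar>\<tau>\<bar> + 1) / (- frob Y W)"
      have "0 < k" unfolding k_def using neg by (intro divide_pos_pos) auto
      then have "(k *\<^sub>R W, -1) \<in> T" using W by (simp add: T_def quad_eq_frob_outer frob_scaleR_left)
      then have "b \<le> a \<bullet> (k *\<^sub>R W, -1)" using ab(3) by blast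
      moreover have "a \<bullet> (k *\<^sub>R W, -1) = k * frob Y W - \<tau>"
        unfolding a_inner by (simp add: frob_scaleR_right)
      moreover have "k * frob Y W = - (\<bar>\<tau>\<bar> + 1)" using neg by (simp add: k_def)
      ultimately show False using \<open>0 \<le> b\<close> by linarith
    qed
  qed
qed

lemma quad_transpose:
  fixes Y :: "real^'n^'n"
  shows "v \<bullet> (transpose Y *v v) = v \<bullet> (Y *v v)"
proof -
  have "transpose (outer v) = outer v" using sym_mat_outer unfolding sym_mat_def .
  then show ?thesis unfolding quad_eq_frob_outer frob_transpose by simp
qed

lemma quad_outer_nonneg: "0 \<le> w \<bullet> (outer v *v w)"
  by (simp add: quad_eq_frob_outer frob_outer_outer)

lemma dual_psd_cone_pd_pos:
  fixes Y P :: "real^'n^'n"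
  assumes "Y \<noteq> 0" "\<And>W. (\<forall>v. 0 \<le> v \<bullet> (W *v v)) \<Longrightarrow> 0 \<le> frob Y W" "pd P"
  shows "0 < frob Y P"
proof -
  obtain \<mu> where \<mu>: "\<mu> > 0" "\<And>v. \<mu> * (v \<bullet> v) \<le> v \<bullet> (P *v v)"
    using pd_quad_lower_bound[OF assms(3)] by blast
  obtain B where B: "B > 0" "\<And>v. \<bar>v \<bullet> (Y *v v)\<bar> \<le> B * (v \<bullet> v)"
    using quad_upper_bound by blast
  have "0 \<le> v \<bullet> ((P - (\<mu> / B) *\<^sub>R Y) *v v)" for v
  proof -
    have "(\<mu> / B) * (v \<bullet> (Y *v v)) \<le> (\<mu> / B) * (B * (v \<bullet> v))"
      using B \<mu>(1) by (intro mult_left_mono) (auto simp: abs_le_iff)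
    also have "\<dots> \<le> v \<bullet> (P *v v)" using B(1) \<mu>(2)[of v] by simp
    finally show ?thesis by (simp add: quad_eq_frob_outer frob_diff_left frob_scaleR_left)
  qed
  then have "0 \<le> frob Y (P - (\<mu> / B) *\<^sub>R Y)" by (rule assms(2)[rule_format])
  then have "(\<mu> / B) * frob Y Y \<le> frob Y P" by (simp add: frob_diff_right frob_scaleR_right)
  moreover have "0 < frob Y Y" using assms(1) by (simp flip: inner_eq_frob)
  ultimately show ?thesis using \<mu>(1) B(1) by (smt (verit) divide_pos_pos mult_pos_pos)
qed

lemma sum_unit_weights:
  fixes M :: "'i \<Rightarrow> 'a::real_vector" and r :: "'i \<Rightarrow> real"
  assumes "i \<in> S" "finite S"
  shows "(\<Sum>j\<in>S. (if j = i then c else 0) *\<^sub>R M j) = c *\<^sub>R M i"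
    and "(\<Sum>j\<in>S. (if j = i then c else 0) * r j) = c * r i"
proof -
  have "(\<Sum>j\<in>S. (if j = i then c else 0) *\<^sub>R M j) = (\<Sum>j\<in>S. if j = i then c *\<^sub>R M j else 0)"
    by (rule sum.cong) auto
  then show "(\<Sum>j\<in>S. (if j = i then c else 0) *\<^sub>R M j) = c *\<^sub>R M i"
    using assms by simp
  have "(\<Sum>j\<in>S. (if j = i then c else 0) * r j) = (\<Sum>j\<in>S. if j = i then c * r j else 0)"
    by (rule sum.cong) auto
  then show "(\<Sum>j\<in>S. (if j = i then c else 0) * r j) = c * r i"
    using assms by simp
qed

text \<open>Separate the cone of admissible combinations from the psd cone: the Slater point g rules
  out a vertical hyperplane, and the symmetrized, rescaled normal of any other one is Z.\<close>

lemma lmi_alternative: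
  fixes A :: "nat \<Rightarrow> real^'n^'n" and r g :: "nat \<Rightarrow> real"
  assumes symA: "\<forall>i\<in>{0..m}. sym_mat (A i)" and "mI \<le> m"
    and gI: "\<forall>i\<in>{1..mI}. 0 \<le> g i" and gpd: "pd (Amat m A g)"
    and hyp: "\<And>l. 0 \<le> l 0 \<Longrightarrow> (\<forall>i\<in>{1..mI}. 0 \<le> l i) \<Longrightarrow> psd (\<Sum>i\<in>{0..m}. l i *\<^sub>R A i)
                 \<Longrightarrow> 0 \<le> (\<Sum>i\<in>{0..m}. l i * r i)"
  obtains Z where "psd Z" "frob (A 0) Z \<le> r 0" "\<forall>i\<in>{1..mI}. frob (A i) Z \<le> r i"
    "\<forall>i\<in>{mI+1..m}. frob (A i) Z = r i"
proof -
  obtain Y \<tau> where nonzero: "(Y, \<tau>) \<noteq> 0" and "\<tau> \<le> 0"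
    and sep: "\<And>l. 0 \<le> l 0 \<Longrightarrow> (\<forall>i\<in>{1..mI}. 0 \<le> l i) \<Longrightarrow>
       frob Y (\<Sum>i\<in>{0..m}. l i *\<^sub>R A i) + \<tau> * (\<Sum>i\<in>{0..m}. l i * r i) \<le> 0"
    and dual: "\<And>W. (\<forall>v. 0 \<le> v \<bullet> (W *v v)) \<Longrightarrow> 0 \<le> frob Y W"
    using conic_separation[OF symA hyp] by blast
  have le: "frob Y (A i) + \<tau> * r i \<le> 0" if "i \<in> {0..m}" for i
    using sep[of "\<lambda>j. if j = i then 1 else 0"] that by (simp add: sum_unit_weights)
  have ge: "0 \<le> frob Y (A i) + \<tau> * r i" if "i \<in> {mI+1..m}" for i
    using sep[of "\<lambda>j. if j = i then -1 else 0"] that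
    by (simp add: sum_unit_weights frob_uminus_right)
  have "\<tau> \<noteq> 0"
  proof
    assume "\<tau> = 0"
    then have "Y \<noteq> 0" using nonzero by (simp add: zero_prod_def)
    have "(\<Sum>i\<in>{0..m}. (if i = 0 then 1 else g i) *\<^sub>R A i) = Amat m A g"
      unfolding Amat_def by (simp add: sum.atLeast_Suc_atMost)
    then have "frob Y (Amat m A g) \<le> 0"
      using sep[of "\<lambda>i. if i = 0 then 1 else g i"] gI \<open>\<tau> = 0\<close> by simp
    with dual_psd_cone_pd_pos[OF \<open>Y \<noteq> 0\<close> dual gpd] show False by simp
  qed
  with \<open>\<tau> \<le> 0\<close> have "0 < - \<tau>" by simp
  define Z where "Z = (1 / (- 2 * \<tau>)) *\<^sub>R (Y + transpose Y)"
  have frob_Z: "frob (A i) Z = frob Y (A i) / (- \<tau>)" if "i \<in> {0..m}" for i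
  proof -
    have "frob (A i) (transpose Y) = frob (A i) Y"
      using symA that by (metis frob_transpose sym_mat_def)
    then show ?thesis unfolding Z_def frob_scaleR_right frob_add_right frob_comm[of "A i" Y]
      by simp
  qed
  have "psd Z"
    unfolding psd_def
  proof
    show "sym_mat Z" unfolding Z_def by (intro sym_mat_scaleR sym_mat_symmetrize)
    show "\<forall>v. 0 \<le> v \<bullet> (Z *v v)"
    proof
      fix v
      have "v \<bullet> (Z *v v) = (v \<bullet> (Y *v v) + v \<bullet> (transpose Y *v v)) / (- 2 * \<tau>)"
        unfolding Z_def quad_eq_frob_outer frob_scaleR_left frob_add_left by simp
      also have "\<dots> = v \<bullet> (Y *v v) / (- \<tau>)" unfolding quad_transpose by simp
      finally show "0 \<le> v \<bullet> (Z *v v)"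
        using dual[OF allI[OF quad_outer_nonneg]] \<open>0 < - \<tau>\<close>
        by (simp add: quad_eq_frob_outer divide_nonneg_neg)
    qed
  qed
  moreover have "frob (A i) Z \<le> r i" if "i \<in> {0..m}" for i
  proof -
    have "frob Y (A i) \<le> r i * (- \<tau>)" using le[OF that] by (simp add: algebra_simps)
    then show ?thesis unfolding frob_Z[OF that] using pos_divide_le_eq[OF \<open>0 < - \<tau>\<close>] by blast
  qed
  moreover have "r i \<le> frob (A i) Z" if "i \<in> {mI+1..m}" for i
  proof -
    have "r i * (- \<tau>) \<le> frob Y (A i)" using ge[OF that] by (simp add: algebra_simps)
    moreover have "i \<in> {0..m}" using that by simp
    ultimately show ?thesis unfolding frob_Z[OF \<open>i \<in> {0..m}\<close>]
      using pos_le_divide_eq[OF \<open>0 < - \<tau>\<close>] by blast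
  qed
  ultimately show ?thesis
    using \<open>mI \<le> m\<close> by (intro that) (auto intro: order_antisym)
qed

subsection \<open>Duality\<close>

lemma psd_add: "psd M \<Longrightarrow> psd N \<Longrightarrow> psd (M + N)"
  unfolding psd_def by (simp add: sym_mat_add quad_eq_frob_outer frob_add_left add_nonneg_nonneg)

lemma psd_scaleR: "psd M \<Longrightarrow> 0 \<le> c \<Longrightarrow> psd (c *\<^sub>R M)"
  unfolding psd_def by (simp add: sym_mat_scaleR quad_eq_frob_outer frob_scaleR_left)

lemma frob_Amat: "frob (Amat m A \<gamma>) Z = frob (A 0) Z + (\<Sum>i\<in>{1..m}. \<gamma> i * frob (A i) Z)"
  unfolding Amat_def by (simp add: frob_add_left frob_sum_left frob_scaleR_left)

lemma frob_Qmat: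
  "frob (Qmat A b c i) (blk 1 x X) = qf (A i) (b i) (c i) x + frob (A i) (X - outer x)"
  unfolding Qmat_def frob_blk qf_def quad_eq_frob_outer frob_diff_right by simp

lemma qgam_le_sdp_objective:
  fixes A :: "nat \<Rightarrow> real^'n^'n"
  assumes feas: "sdp_feas mI mE A b c x X" and gam: "\<gamma> \<in> Gam mI mE A"
  shows "qgam (mI+mE) A b c \<gamma> x \<le> frob (Qmat A b c 0) (blk 1 x X)"
proof -
  let ?m = "mI + mE"
  let ?q = "\<lambda>i. qf (A i) (b i) (c i) x"
  let ?z = "\<lambda>i. frob (A i) (X - outer x)"
  have "\<gamma> i * ?q i \<le> - (\<gamma> i * ?z i)" if "i \<in> {1..?m}" for i
  proof (cases "i \<le> mI")
    case True
    then have "?q i + ?z i \<le> 0" "0 \<le> \<gamma> i"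
      using feas gam that unfolding sdp_feas_def Gam_def frob_Qmat by auto
    then have "\<gamma> i * (?q i + ?z i) \<le> 0" by (simp add: mult_nonneg_nonpos)
    then show ?thesis by (simp add: algebra_simps)
  next
    case False
    then have "?q i + ?z i = 0" using feas that unfolding sdp_feas_def frob_Qmat by auto
    then have "?q i = - ?z i" by (simp add: eq_neg_iff_add_eq_0)
    then show ?thesis by simp
  qed
  then have "(\<Sum>i\<in>{1..?m}. \<gamma> i * ?q i) \<le> (\<Sum>i\<in>{1..?m}. - (\<gamma> i * ?z i))"
    by (rule sum_mono)
  then have "(\<Sum>i\<in>{1..?m}. \<gamma> i * ?q i) \<le> - (\<Sum>i\<in>{1..?m}. \<gamma> i * ?z i)"
    by (simp add: sum_negf)
  moreover have "0 \<le> frob (Amat ?m A \<gamma>) (X - outer x)"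
  proof (rule psd_frob_nonneg)
    show "psd (Amat ?m A \<gamma>)" using gam by (simp add: Gam_def)
    have "psd (blk 1 x X)" using feas by (simp add: sdp_feas_def)
    then have "psd (X - outer x)" by (simp only: psd_blk_iff)
    then show "\<forall>v. 0 \<le> v \<bullet> ((X - outer x) *v v)" by (simp add: psd_def)
  qed
  ultimately show ?thesis unfolding qgam_def frob_Qmat frob_Amat by simp
qed

lemma sum_perturbed_weights:
  fixes h :: "nat \<Rightarrow> 'a::real_vector"
  assumes "D = 1 + s * l 0" "D \<noteq> 0"
  shows "h 0 + (\<Sum>i\<in>{1..m}. ((g i + s * l i) / D) *\<^sub>R h i) =
    (1 / D) *\<^sub>R (h 0 + (\<Sum>i\<in>{1..m}. g i *\<^sub>R h i) + s *\<^sub>R (\<Sum>i\<in>{0..m}. l i *\<^sub>R h i))"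
proof -
  have "(\<Sum>i\<in>{1..m}. ((g i + s * l i) / D) *\<^sub>R h i) =
      (\<Sum>i\<in>{1..m}. (1 / D) *\<^sub>R (g i *\<^sub>R h i + s *\<^sub>R (l i *\<^sub>R h i)))"
    by (rule sum.cong) (simp_all add: scaleR_add_left scaleR_add_right add_divide_distrib)
  also have "\<dots> = (1 / D) *\<^sub>R ((\<Sum>i\<in>{1..m}. g i *\<^sub>R h i) + s *\<^sub>R (\<Sum>i\<in>{1..m}. l i *\<^sub>R h i))"
    by (simp only: sum.distrib scaleR_add_right scaleR_sum_right)
  finally have "(\<Sum>i\<in>{1..m}. ((g i + s * l i) / D) *\<^sub>R h i) =
      (1 / D) *\<^sub>R ((\<Sum>i\<in>{1..m}. g i *\<^sub>R h i) + s *\<^sub>R (\<Sum>i\<in>{1..m}. l i *\<^sub>R h i))" .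
  moreover have "h 0 + s *\<^sub>R (l 0 *\<^sub>R h 0) = D *\<^sub>R h 0"
    using assms(1) by (simp add: scaleR_add_left)
  then have "h 0 = (1 / D) *\<^sub>R (h 0 + s *\<^sub>R (l 0 *\<^sub>R h 0))" using assms(2) by simp
  ultimately show ?thesis
    by (simp add: sum.atLeast_Suc_atMost scaleR_add_right algebra_simps)
qed

text \<open>If the combination l made the right-hand sides negative, the multipliers
  (g + s l) / (1 + s l_0) would stay in Gamma while q(., x) along them exceeds 2t for large s.\<close>

lemma homogenized_multipliers_nonneg:
  fixes A :: "nat \<Rightarrow> real^'n^'n"
  assumes gpd: "pd (Amat m A g)" and "\<forall>i\<in>{1..mI}. 0 \<le> g i" and "mI \<le> m"
    and bound: "\<And>\<gamma>. (\<forall>i. i \<notin> {1..m} \<longrightarrow> \<gamma> i = 0) \<Longrightarrow> psd (Amat m A \<gamma>)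
        \<Longrightarrow> (\<forall>i\<in>{1..mI}. 0 \<le> \<gamma> i) \<Longrightarrow> qgam m A b c \<gamma> x \<le> 2 * t"
    and l0: "0 \<le> l 0" and lI: "\<forall>i\<in>{1..mI}. 0 \<le> l i" and psdl: "psd (\<Sum>i\<in>{0..m}. l i *\<^sub>R A i)"
  shows "0 \<le> (\<Sum>i\<in>{0..m}. l i *
    (if i = 0 then 2 * t - qf (A 0) (b 0) (c 0) x else - qf (A i) (b i) (c i) x))"
proof (rule ccontr)
  let ?q = "\<lambda>i. qf (A i) (b i) (c i) x"
  define \<beta> where "\<beta> = (\<Sum>i\<in>{0..m}. l i * (if i = 0 then 2 * t - ?q 0 else - ?q i))"
  assume "\<not> 0 \<le> \<beta>"
  have "(\<Sum>i\<in>{1..m}. l i * (if i = 0 then 2 * t - ?q 0 else - ?q i)) = - (\<Sum>i\<in>{1..m}. l i * ?q i)"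
    by (simp add: sum_negf[symmetric])
  then have \<beta>_eq: "\<beta> = 2 * t * l 0 - (\<Sum>i\<in>{0..m}. l i * ?q i)"
    unfolding \<beta>_def by (simp add: sum.atLeast_Suc_atMost algebra_simps)
  define Q where "Q = qgam m A b c g x"
  define s where "s = (\<bar>2 * t - Q\<bar> + 1) / (- \<beta>)"
  have "0 < s" unfolding s_def using \<open>\<not> 0 \<le> \<beta>\<close> by (intro divide_pos_pos) auto
  have s\<beta>: "s * \<beta> = - (\<bar>2 * t - Q\<bar> + 1)" unfolding s_def using \<open>\<not> 0 \<le> \<beta>\<close> by simp
  define D where "D = 1 + s * l 0"
  have "0 < D" unfolding D_def using \<open>0 < s\<close> l0 by (simp add: add_pos_nonneg)
  then have "D \<noteq> 0" by simp
  define \<gamma> where "\<gamma> = (\<lambda>i. if i \<in> {1..m} then (g i + s * l i) / D else 0)"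
  have \<gamma>_sum: "(\<Sum>i\<in>{1..m}. \<gamma> i *\<^sub>R h i) = (\<Sum>i\<in>{1..m}. ((g i + s * l i) / D) *\<^sub>R h i)"
    for h :: "nat \<Rightarrow> real^'n^'n"
    by (rule sum.cong) (auto simp: \<gamma>_def)
  have "\<forall>i. i \<notin> {1..m} \<longrightarrow> \<gamma> i = 0" by (simp add: \<gamma>_def)
  moreover have "psd (Amat m A \<gamma>)"
  proof -
    have "Amat m A \<gamma> = (1 / D) *\<^sub>R (Amat m A g + s *\<^sub>R (\<Sum>i\<in>{0..m}. l i *\<^sub>R A i))"
      unfolding Amat_def \<gamma>_sum
        sum_perturbed_weights[where h = A and l = l and s = s and D = D, OF D_def \<open>D \<noteq> 0\<close>]
      by (simp add: add.assoc)
    then show ?thesis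
      using \<open>0 < D\<close> \<open>0 < s\<close> by (simp add: psd_scaleR psd_add pd_imp_psd[OF gpd] psdl)
  qed
  moreover have "\<forall>i\<in>{1..mI}. 0 \<le> \<gamma> i"
    using assms(2,3) lI \<open>0 < s\<close> \<open>0 < D\<close> by (auto simp: \<gamma>_def)
  ultimately have "qgam m A b c \<gamma> x \<le> 2 * t" by (rule bound)
  moreover have "qgam m A b c \<gamma> x = (Q + s * (\<Sum>i\<in>{0..m}. l i * ?q i)) / D"
  proof -
    have "(\<Sum>i\<in>{1..m}. \<gamma> i * ?q i) = (\<Sum>i\<in>{1..m}. ((g i + s * l i) / D) *\<^sub>R ?q i)"
      by (rule sum.cong) (auto simp: \<gamma>_def)
    then show ?thesis
      unfolding qgam_def Q_def
      using sum_perturbed_weights[where h = ?q and l = l and s = s and D = D and m = m and g = g,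
          OF D_def \<open>D \<noteq> 0\<close>]
      by (simp add: add.assoc)
  qed
  ultimately have "Q + s * (\<Sum>i\<in>{0..m}. l i * ?q i) \<le> 2 * t * D"
    using \<open>0 < D\<close> by (simp add: divide_le_eq)
  then have "Q - s * \<beta> \<le> 2 * t" unfolding \<beta>_eq D_def by (simp add: algebra_simps)
  then show False unfolding s\<beta> by linarith
qed

lemma D_SDP_iff:
  fixes A :: "nat \<Rightarrow> real^'n^'n"
  assumes symA: "\<forall>i\<in>{0..mI+mE}. sym_mat (A i)"
    and gI: "\<forall>i\<in>{1..mI}. 0 \<le> g i" and gpd: "pd (Amat (mI+mE) A g)"
  shows "(x, t) \<in> D_SDP mI mE A b c \<longleftrightarrow> supq mI mE A b c x \<le> ereal (2 * t)"
proof
  assume "(x, t) \<in> D_SDP mI mE A b c"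
  then obtain X where X: "sdp_feas mI mE A b c x X" "frob (Qmat A b c 0) (blk 1 x X) \<le> 2 * t"
    by (auto simp: D_SDP_def)
  show "supq mI mE A b c x \<le> ereal (2 * t)"
    unfolding supq_def
    by (rule SUP_least) (use qgam_le_sdp_objective[OF X(1)] X(2) in force)
next
  let ?m = "mI + mE"
  let ?q = "\<lambda>i. qf (A i) (b i) (c i) x"
  assume "supq mI mE A b c x \<le> ereal (2 * t)"
  then have bound: "qgam ?m A b c \<gamma> x \<le> 2 * t" if "\<gamma> \<in> Gam mI mE A" for \<gamma>
    using that unfolding supq_def by (simp add: SUP_le_iff)
  define r where "r = (\<lambda>i. if i = 0 then 2 * t - ?q 0 else - ?q i)"
  have "0 \<le> (\<Sum>i\<in>{0..?m}. l i * r i)"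
    if "0 \<le> l 0" "\<forall>i\<in>{1..mI}. 0 \<le> l i" "psd (\<Sum>i\<in>{0..?m}. l i *\<^sub>R A i)" for l
    unfolding r_def using that
    by (intro homogenized_multipliers_nonneg[OF gpd gI]) (auto simp: Gam_def intro: bound)
  then obtain Z where Z: "psd Z" "frob (A 0) Z \<le> r 0" "\<forall>i\<in>{1..mI}. frob (A i) Z \<le> r i"
    "\<forall>i\<in>{mI+1..?m}. frob (A i) Z = r i"
    using lmi_alternative[OF symA le_add1 gI gpd, of r] by blast
  define X where "X = outer x + Z"
  have XZ: "X - outer x = Z" by (simp add: X_def)
  have "sym_mat X" using Z(1) unfolding X_def psd_def by (simp add: sym_mat_add sym_mat_outer)
  have "sdp_feas mI mE A b c x X"
    unfolding sdp_feas_def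
  proof (intro conjI ballI)
    show "sym_mat X" by fact
    show "psd (blk 1 x X)" using \<open>sym_mat X\<close> Z(1) XZ by (simp add: psd_blk_iff)
  next
    fix i assume "i \<in> {1..mI}"
    then show "frob (Qmat A b c i) (blk 1 x X) \<le> 0"
      using Z(3) unfolding frob_Qmat XZ r_def by fastforce
  next
    fix i assume "i \<in> {mI+1..?m}"
    then show "frob (Qmat A b c i) (blk 1 x X) = 0"
      using Z(4) unfolding frob_Qmat XZ r_def by fastforce
  qed
  moreover have "frob (Qmat A b c 0) (blk 1 x X) \<le> 2 * t"
    using Z(2) unfolding frob_Qmat XZ r_def by simp
  ultimately show "(x, t) \<in> D_SDP mI mE A b c" unfolding D_SDP_def by blast
qed

lemma Opt_SDP_eq_minimum:
  assumes D: "\<And>x t. (x, t) \<in> D_SDP mI mE A b c \<longleftrightarrow> supq mI mE A b c x \<le> ereal (2 * t)"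
    and min: "\<And>x. supq mI mE A b c x0 \<le> supq mI mE A b c x"
    and finite: "supq mI mE A b c x0 = ereal w"
  shows "Opt_SDP mI mE A b c = supq mI mE A b c x0"
proof (rule antisym)
  obtain X where X: "sdp_feas mI mE A b c x0 X" "frob (Qmat A b c 0) (blk 1 x0 X) \<le> w"
    using D[of x0 "w / 2"] finite by (auto simp: D_SDP_def)
  then have "Opt_SDP mI mE A b c \<le> ereal (frob (Qmat A b c 0) (blk 1 x0 X))"
    unfolding Opt_SDP_def by (intro Inf_lower) blast
  with X(2) finite show "Opt_SDP mI mE A b c \<le> supq mI mE A b c x0"
    by (simp add: order_trans)
next
  show "supq mI mE A b c x0 \<le> Opt_SDP mI mE A b c"
    unfolding Opt_SDP_def
  proof (rule Inf_greatest)
    fix y assume "y \<in> {ereal (frob (Qmat A b c 0) (blk 1 x X)) |x X. sdp_feas mI mE A b c x X}"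
    then obtain x X where y: "y = ereal (frob (Qmat A b c 0) (blk 1 x X))" "sdp_feas mI mE A b c x X"
      by blast
    then have "(x, frob (Qmat A b c 0) (blk 1 x X) / 2) \<in> D_SDP mI mE A b c"
      unfolding D_SDP_def by auto
    then have "supq mI mE A b c x \<le> y" using D y(1) by simp
    then show "supq mI mE A b c x0 \<le> y" using min order_trans by blast
  qed
qed

subsection \<open>Attainment of the minimum\<close>

text \<open>A supremum of continuous functions is lower semicontinuous, so its sublevel sets are closed;
  one coercive member makes them bounded.\<close>

lemma SUP_continuous_coercive_attains_Inf:
  fixes f :: "'i \<Rightarrow> 'a::heine_borel \<Rightarrow> real"
  assumes cont: "\<And>i. i \<in> I \<Longrightarrow> continuous_on UNIV (f i)"
    and "i0 \<in> I" and coercive: "\<And>C. bounded {x. f i0 x \<le> C}"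
    and finite: "(SUP i\<in>I. ereal (f i x1)) < \<infinity>"
  obtains x0 where "\<And>x. (SUP i\<in>I. ereal (f i x0)) \<le> (SUP i\<in>I. ereal (f i x))"
proof -
  define F where "F x = (SUP i\<in>I. ereal (f i x))" for x
  have lower: "ereal (f i0 x) \<le> F x" for x unfolding F_def using \<open>i0 \<in> I\<close> by (rule SUP_upper)
  have nest: "\<exists>x0. \<forall>n. F x0 \<le> ereal (u n)"
    if dec: "\<And>m n. m \<le> n \<Longrightarrow> u n \<le> u m" and ne: "\<And>n. \<exists>x. F x \<le> ereal (u n)"
    for u :: "nat \<Rightarrow> real"
  proof -
    have sublevel: "{x. F x \<le> ereal C} = (\<Inter>i\<in>I. {x. f i x \<le> C})" for C
      unfolding F_def by (auto simp: SUP_le_iff)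
    have "closed {x. F x \<le> ereal (u n)}" for n
      unfolding sublevel by (intro closed_INT ballI closed_Collect_le cont continuous_on_const)
    moreover have "{x. F x \<le> ereal (u n)} \<noteq> {}" for n using ne[of n] by auto
    moreover have "{x. F x \<le> ereal (u n)} \<subseteq> {x. F x \<le> ereal (u m)}" if "m \<le> n" for m n
      using dec[OF that] by (auto intro: order_trans)
    moreover have "bounded {x. F x \<le> ereal (u 0)}"
    proof (rule bounded_subset[OF coercive[of "u 0"]])
      show "{x. F x \<le> ereal (u 0)} \<subseteq> {x. f i0 x \<le> u 0}"
        using order_trans[OF lower] by fastforce
    qed
    ultimately show ?thesis
      by (rule bounded_closed_nest) auto
  qed
  define V where "V = (INF x. F x)"
  have below: "\<exists>x. F x \<le> ereal e" if "V < ereal e" for e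
    using that unfolding V_def by (auto simp: INF_less_iff intro: less_imp_le)
  have "V \<le> F x1" unfolding V_def by (rule INF_lower) simp
  then have "V < \<infinity>" using finite unfolding F_def by (rule le_less_trans)
  then consider "V = -\<infinity>" | v where "V = ereal v" by (cases V) auto
  then obtain x0 where "F x0 \<le> V"
  proof cases
    case 1
    obtain x0 where "\<forall>n. F x0 \<le> ereal (- real n)"
      using nest[of "\<lambda>n. - real n"] below 1 by auto
    then have "f i0 x0 \<le> - real n" for n using lower[of x0] order_trans by fastforce
    moreover obtain n where "- f i0 x0 < real n" using reals_Archimedean2 by blast
    ultimately show ?thesis by (meson le_minus_iff not_le)
  next
    case 2
    have "\<exists>x0. \<forall>n. F x0 \<le> ereal (v + inverse (real (Suc n)))"
    proof (rule nest)
      show "v + inverse (real (Suc n)) \<le> v + inverse (real (Suc m))" if "m \<le> n" for m n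
        using that by (simp add: le_imp_inverse_le)
      show "\<exists>x. F x \<le> ereal (v + inverse (real (Suc n)))" for n
        using below 2 by simp
    qed
    then obtain x0 where x0: "\<forall>n. F x0 \<le> ereal (v + inverse (real (Suc n)))" by blast
    have "F x0 \<le> ereal v"
      by (rule LIMSEQ_le_const[OF tendsto_ereal[OF LIMSEQ_inverse_real_of_nat_add]]) (use x0 in auto)
    with 2 show ?thesis by (intro that) simp
  qed
  moreover have "V \<le> F x" for x unfolding V_def by (rule INF_lower) simp
  ultimately show ?thesis using that unfolding F_def by (meson order_trans)
qed

lemma qgam_eq_qf:
  "qgam m A b c g x =
    qf (Amat m A g) (b 0 + (\<Sum>i\<in>{1..m}. g i *\<^sub>R b i)) (c 0 + (\<Sum>i\<in>{1..m}. g i * c i)) x"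
  by (simp add: qgam_def qf_def quad_eq_frob_outer frob_Amat inner_add_left inner_sum_left
      sum.distrib sum_distrib_left algebra_simps)

lemma continuous_on_qf: "continuous_on UNIV (qf P b c)"
  unfolding qf_def by (intro continuous_intros matrix_vector_mult_linear_continuous_on)

lemma qgam_le_objective:
  fixes A :: "nat \<Rightarrow> real^'n^'n"
  assumes "\<forall>i\<in>{1..mI}. qf (A i) (b i) (c i) x \<le> 0" "\<forall>i\<in>{mI+1..mI+mE}. qf (A i) (b i) (c i) x = 0"
    and "\<gamma> \<in> Gam mI mE A"
  shows "qgam (mI+mE) A b c \<gamma> x \<le> qf (A 0) (b 0) (c 0) x"
proof -
  have "\<gamma> i * qf (A i) (b i) (c i) x \<le> 0" if "i \<in> {1..mI+mE}" for i
  proof (cases "i \<le> mI")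
    case True
    then show ?thesis using assms that by (auto simp: Gam_def intro: mult_nonneg_nonpos)
  next
    case False
    then show ?thesis using assms that by auto
  qed
  then have "(\<Sum>i\<in>{1..mI+mE}. \<gamma> i * qf (A i) (b i) (c i) x) \<le> 0" by (meson sum_nonpos)
  then show ?thesis unfolding qgam_def by simp
qed

lemma supq_attains_minimum:
  fixes A :: "nat \<Rightarrow> real^'n^'n"
  assumes gI: "\<forall>i\<in>{1..mI}. 0 \<le> g i" and gpd: "pd (Amat (mI+mE) A g)"
    and feasible: "\<exists>x. (\<forall>i\<in>{1..mI}. qf (A i) (b i) (c i) x \<le> 0)
                       \<and> (\<forall>i\<in>{mI+1..mI+mE}. qf (A i) (b i) (c i) x = 0)"
  obtains x0 w where "\<And>x. supq mI mE A b c x0 \<le> supq mI mE A b c x" "supq mI mE A b c x0 = ereal w"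
proof -
  let ?m = "mI + mE"
  define g' where "g' = (\<lambda>i. if i \<in> {1..?m} then g i else 0)"
  have "Amat ?m A g' = Amat ?m A g" unfolding Amat_def g'_def by (auto intro!: sum.cong)
  then have "g' \<in> Gam mI mE A" using gI pd_imp_psd[OF gpd] by (auto simp: Gam_def g'_def)
  have "bounded {x. qgam ?m A b c g' x \<le> C}" for C
    unfolding qgam_eq_qf \<open>Amat ?m A g' = Amat ?m A g\<close> using gpd by (rule pd_qf_sublevel_bounded)
  moreover obtain xf where "\<forall>i\<in>{1..mI}. qf (A i) (b i) (c i) xf \<le> 0"
    "\<forall>i\<in>{mI+1..?m}. qf (A i) (b i) (c i) xf = 0"
    using feasible by blast
  then have "supq mI mE A b c xf \<le> ereal (qf (A 0) (b 0) (c 0) xf)"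
    unfolding supq_def by (intro SUP_least) (simp add: qgam_le_objective)
  then have "supq mI mE A b c xf < \<infinity>" by (rule le_less_trans) simp
  ultimately obtain x0 where min: "\<And>x. supq mI mE A b c x0 \<le> supq mI mE A b c x"
    using SUP_continuous_coercive_attains_Inf[of "Gam mI mE A" "qgam ?m A b c" g' xf]
      \<open>g' \<in> Gam mI mE A\<close> unfolding supq_def qgam_eq_qf[abs_def] by (blast intro: continuous_on_qf)
  have "ereal (qgam ?m A b c g' x0) \<le> supq mI mE A b c x0"
    unfolding supq_def using \<open>g' \<in> Gam mI mE A\<close> by (rule SUP_upper)
  moreover have "supq mI mE A b c x0 < \<infinity>"
    using le_less_trans[OF min[of xf] \<open>supq mI mE A b c xf < \<infinity>\<close>] .
  ultimately obtain w where "supq mI mE A b c x0 = ereal w" by (cases "supq mI mE A b c x0") auto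
  with min show ?thesis by (rule that)
qed

theorem mainTheorem1:
  fixes mI mE :: nat
    and A :: "nat \<Rightarrow> real^'n^'n" and b :: "nat \<Rightarrow> real^'n" and c :: "nat \<Rightarrow> real"
  assumes m_pos: "mI + mE \<ge> 1"
    and symA: "\<forall>i\<in>{0..mI+mE}. sym_mat (A i)"
    and feasible: "\<exists>x. (\<forall>i\<in>{1..mI}. qf (A i) (b i) (c i) x \<le> 0)
                       \<and> (\<forall>i\<in>{mI+1..mI+mE}. qf (A i) (b i) (c i) x = 0)"
    and slater: "\<exists>\<gamma>s. (\<forall>i\<in>{1..mI}. 0 \<le> \<gamma>s i) \<and> pd (Amat (mI+mE) A \<gamma>s)"
  shows "D_SDP mI mE A b c = {(x, t). supq mI mE A b c x \<le> ereal (2 * t)}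
    \<and> (\<exists>x0. (\<forall>x. supq mI mE A b c x0 \<le> supq mI mE A b c x)
            \<and> Opt_SDP mI mE A b c = supq mI mE A b c x0)"
proof -
  obtain g where gI: "\<forall>i\<in>{1..mI}. 0 \<le> g i" and gpd: "pd (Amat (mI+mE) A g)"
    using slater by blast
  note D = D_SDP_iff[OF symA gI gpd]
  obtain x0 w where min: "\<And>x. supq mI mE A b c x0 \<le> supq mI mE A b c x"
    and "supq mI mE A b c x0 = ereal w"
    using supq_attains_minimum[OF gI gpd feasible] by blast
  have "Opt_SDP mI mE A b c = supq mI mE A b c x0"
    by (rule Opt_SDP_eq_minimum[OF D min]) fact
  with D min show ?thesis by auto
qed

end
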